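(* Let $x,y\in\mathbb{R}$ and let $\mathcal{A}$ be the Apollonian disk packing generated by a tricycle whose three disks have signed curvatures $1-y$, $x^2+y^2-y$ and $y$. Suppose $\mathcal{A}$ is integral up to scaling, i.e. there is a real $\lambda>0$ such that $\lambda\kappa\in\mathbb{Z}$ for the curvature $\kappa$ of every disk of $\mathcal{A}$. Then $x\in\mathbb{Q}$ and $y\in\mathbb{Q}$.
   Context: A tricycle is a triple of mutually tangent (generalized) disks (circles or lines, with signed curvatures, a line having curvature $0$ and an enclosing disk having negative curvature). A Descartes configuration is a quadruple of mutually tangent disks, with curvatures satisfying $(a+b+c+d)^2=2(a^2+b^2+c^2+d^2)$. The Apollonian disk packing generated by a tricycle is obtained by recursively completing every tricycle already constructed to a Descartes configuration. The triple $(1-y,\,x^2+y^2-y,\,y)$ is the curvature triple of the tricycle described by the tangency Pauli spinor $(1,\,x+iy)$, i.e. by the two tangency spinors $(1,0)$ and $(x,y)$ issuing from the disk of curvature $y$. *)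

theory Defs
  imports Complex_Main
begin

text \<open>A tricycle is recorded by the
triple of signed curvatures of its three mutually tangent disks.  By Descartes'
theorem, the two disks completing a tricycle with curvatures (a,b,c) to a Descartes
configuration have curvatures a + b + c +/- 2 sqrt(ab + bc + ca).\<close>

inductive_set apollonian_tricycles :: "real \<times> real \<times> real \<Rightarrow> (real \<times> real \<times> real) set"
  for t :: "real \<times> real \<times> real" where
  base: "t \<in> apollonian_tricycles t"
| step1: "\<lbrakk>(a, b, c) \<in> apollonian_tricycles t; s \<in> {-1, 1};
           d = a + b + c + s * 2 * sqrt (a * b + b * c + c * a)\<rbrakk>
          \<Longrightarrow> (a, b, d) \<in> apollonian_tricycles t"
| step2: "\<lbrakk>(a, b, c) \<in> apollonian_tricycles t; s \<in> {-1, 1};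
           d = a + b + c + s * 2 * sqrt (a * b + b * c + c * a)\<rbrakk>
          \<Longrightarrow> (a, c, d) \<in> apollonian_tricycles t"
| step3: "\<lbrakk>(a, b, c) \<in> apollonian_tricycles t; s \<in> {-1, 1};
           d = a + b + c + s * 2 * sqrt (a * b + b * c + c * a)\<rbrakk>
          \<Longrightarrow> (b, c, d) \<in> apollonian_tricycles t"

definition apollonian_curvatures :: "real \<times> real \<times> real \<Rightarrow> real set" where
  "apollonian_curvatures t =
     {k. \<exists>a b c. (a, b, c) \<in> apollonian_tricycles t \<and> (k = a \<or> k = b \<or> k = c)}"

definition integral_up_to_scaling :: "real set \<Rightarrow> bool" where
  "integral_up_to_scaling K \<longleftrightarrow> (\<exists>l::real. l > 0 \<and> (\<forall>k\<in>K. l * k \<in> \<int>))"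

end

theory Submission
  imports Defs
begin

(* The two outer disks 1 - y and y of the generating tricycle have curvatures summing to 1,
   so any scaling factor making the packing integral is itself an integer; hence all
   curvatures are rational.  The two disks completing the generating tricycle have
   curvatures x^2 + 1 +/- 2|x|, because the curvature triple has
   ab + bc + ca = x^2; their difference 4|x| is therefore rational as well. *)

lemma apollonian_tricycle_curvatures:
  assumes "(a, b, c) \<in> apollonian_tricycles t"
  shows "a \<in> apollonian_curvatures t" "b \<in> apollonian_curvatures t"
    "c \<in> apollonian_curvatures t"
  using assms unfolding apollonian_curvatures_def by blast+

lemma apollonian_completion_curvature:
  assumes "(a, b, c) \<in> apollonian_tricycles t" and "s \<in> {-1, 1}"
  shows "a + b + c + s * 2 * sqrt (a * b + b * c + c * a) \<in> apollonian_curvatures t"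
  using apollonian_tricycles.step1[OF assms refl]
  by (rule apollonian_tricycle_curvatures(3))

lemma integral_up_to_scaling_subset_Rats:
  assumes "integral_up_to_scaling K" and "a \<in> K" "b \<in> K" and "a + b \<in> \<rat>" "a + b \<noteq> 0"
  shows "K \<subseteq> \<rat>"
proof
  fix k assume "k \<in> K"
  obtain l where "l > 0" and l_Ints: "\<And>k. k \<in> K \<Longrightarrow> l * k \<in> \<int>"
    using assms(1) unfolding integral_up_to_scaling_def by blast
  have "l * (a + b) \<in> \<int>"
    using l_Ints[OF \<open>a \<in> K\<close>] l_Ints[OF \<open>b \<in> K\<close>] by (simp add: distrib_left)
  then have "l * (a + b) / (a + b) \<in> \<rat>"
    using \<open>a + b \<in> \<rat>\<close> by (intro Rats_divide) (simp_all add: Ints_subset_Rats[THEN subsetD])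
  with \<open>a + b \<noteq> 0\<close> have "l \<in> \<rat>" by (metis nonzero_mult_div_cancel_right)
  moreover have "l * k \<in> \<rat>"
    using l_Ints[OF \<open>k \<in> K\<close>] by (simp add: Ints_subset_Rats[THEN subsetD])
  ultimately have "l * k / l \<in> \<rat>" by (rule Rats_divide[rotated])
  with \<open>l > 0\<close> show "k \<in> \<rat>" by (metis nonzero_mult_div_cancel_left less_irrefl)
qed

lemma rational_apollonian_completion_sqrt:
  assumes "apollonian_curvatures t \<subseteq> \<rat>" and "(a, b, c) \<in> apollonian_tricycles t"
  shows "sqrt (a * b + b * c + c * a) \<in> \<rat>"
proof -
  let ?d = "\<lambda>s. a + b + c + s * 2 * sqrt (a * b + b * c + c * a)"
  have "?d 1 \<in> \<rat>" "?d (-1) \<in> \<rat>"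
    by (rule subsetD[OF assms(1)], rule apollonian_completion_curvature[OF assms(2)], simp)+
  then have "(?d 1 - ?d (-1)) / 4 \<in> \<rat>" by (intro Rats_divide Rats_diff) simp_all
  moreover have "(?d 1 - ?d (-1)) / 4 = sqrt (a * b + b * c + c * a)" by simp
  ultimately show ?thesis by simp
qed

theorem proposition7:
  fixes x y :: real
  assumes "integral_up_to_scaling (apollonian_curvatures (1 - y, x^2 + y^2 - y, y))"
  shows "x \<in> \<rat> \<and> y \<in> \<rat>"
proof -
  define t where "t = (1 - y, x^2 + y^2 - y, y)"
  have base: "(1 - y, x^2 + y^2 - y, y) \<in> apollonian_tricycles t"
    unfolding t_def by (rule apollonian_tricycles.base)
  have rational: "apollonian_curvatures t \<subseteq> \<rat>"
    using assms apollonian_tricycle_curvatures[OF base]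
    by (intro integral_up_to_scaling_subset_Rats[of _ "1 - y" y]) (auto simp: t_def)
  have "(1 - y) * (x^2 + y^2 - y) + (x^2 + y^2 - y) * y + y * (1 - y) = x^2"
    by (simp add: algebra_simps power2_eq_square)
  then have "\<bar>x\<bar> \<in> \<rat>"
    using rational_apollonian_completion_sqrt[OF rational base] by simp
  moreover have "y \<in> \<rat>"
    using rational apollonian_tricycle_curvatures(3)[OF base] by blast
  ultimately show ?thesis by simp
qed

end
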